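(* Let $G$ be a connected $r$-regular graph with $n$ vertices, $m$ edges and $r\ge2$, and let $a,b,c,d$ be vertices of $G$ (viewed also as vertices of $\mathcal Q(G)$). For each Laplacian eigenvalue $\theta$ of $G$ put $\Delta_\theta=\sqrt{(r+2-\theta)^2+4\theta}$, and let $F_\theta(G)$ be the eigenprojector of $L_G$ for $\theta$. (a) If $G$ is non-bipartite, then for all $t\in\mathbb R$, $$\tfrac12(\mathbf e_a^{m+n}-\mathbf e_b^{m+n})^\top e^{-\mathrm it L_{\mathcal Q(G)}}(\mathbf e_c^{m+n}-\mathbf e_d^{m+n})=\tfrac12 e^{-\mathrm it(r+2)/2}\sum_{\theta\in\mathrm{Spec}_L(G)}e^{-\mathrm it\theta/2}(\mathbf e_a^n-\mathbf e_b^n)^\top F_\theta(G)(\mathbf e_c^n-\mathbf e_d^n)\Big(\cos\tfrac{\Delta_\theta t}{2}+\mathrm i\,\tfrac{\theta+2-r}{\Delta_\theta}\sin\tfrac{\Delta_\theta t}{2}\Big).$$ (b) If $G$ is bipartite, then for all $t\in\mathbb R$, $$\tfrac12(\mathbf e_a^{m+n}-\mathbf e_b^{m+n})^\top e^{-\mathrm it L_{\mathcal Q(G)}}(\mathbf e_c^{m+n}-\mathbf e_d^{m+n})=\tfrac12 e^{-\mathrm it(r+2)/2}\sum_{\theta\in\mathrm{Spec}_L(G)\setminus\{2r\}}e^{-\mathrm it\theta/2}(\mathbf e_a^n-\mathbf e_b^n)^\top F_\theta(G)(\mathbf e_c^n-\mathbf e_d^n)\Big(\cos\tfrac{\Delta_\theta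 t}{2}+\mathrm i\,\tfrac{\theta+2-r}{\Delta_\theta}\sin\tfrac{\Delta_\theta t}{2}\Big)+\tfrac12 e^{-\mathrm i rt}(\mathbf e_a^n-\mathbf e_b^n)^\top F_{2r}(G)(\mathbf e_c^n-\mathbf e_d^n).$$
   Context: The Q-graph $\mathcal Q(G)$ is obtained from $G$ by inserting a new vertex into each edge of $G$ and joining by an edge each pair of new vertices lying on adjacent edges of $G$; its vertex set is $V(G)\cup I(G)$ with $I(G)$ the set of new vertices, and its vertices are ordered with the $n$ vertices of $G$ first. $\mathbf e_u^{k}$ denotes the $k$-dimensional standard unit vector of vertex $u$ (in $\mathcal Q(G)$ for $k=m+n$, in $G$ for $k=n$). $L_H=D_H-A_H$ is the Laplacian of a graph $H$, $\mathrm{Spec}_L(G)$ the set of distinct Laplacian eigenvalues of $G$, and $F_\theta(G)$ the orthogonal projection onto the $\theta$-eigenspace of $L_G$. *)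

theory Defs
  imports Complex_Main
begin

definition simple_graph :: "'v set \<Rightarrow> ('v \<Rightarrow> 'v \<Rightarrow> bool) \<Rightarrow> bool" where
  "simple_graph V adj \<longleftrightarrow> finite V \<and> (\<forall>u w. adj u w \<longrightarrow> u \<in> V \<and> w \<in> V)
     \<and> (\<forall>u w. adj u w \<longrightarrow> adj w u) \<and> (\<forall>u. \<not> adj u u)"

definition neighbours :: "'v set \<Rightarrow> ('v \<Rightarrow> 'v \<Rightarrow> bool) \<Rightarrow> 'v \<Rightarrow> 'v set" where
  "neighbours V adj u = {w \<in> V. adj u w}"

definition degree :: "'v set \<Rightarrow> ('v \<Rightarrow> 'v \<Rightarrow> bool) \<Rightarrow> 'v \<Rightarrow> nat" where
  "degree V adj u = card (neighbours V adj u)"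

definition regular :: "'v set \<Rightarrow> ('v \<Rightarrow> 'v \<Rightarrow> bool) \<Rightarrow> nat \<Rightarrow> bool" where
  "regular V adj r \<longleftrightarrow> (\<forall>u \<in> V. degree V adj u = r)"

definition connected_graph :: "'v set \<Rightarrow> ('v \<Rightarrow> 'v \<Rightarrow> bool) \<Rightarrow> bool" where
  "connected_graph V adj \<longleftrightarrow> V \<noteq> {} \<and> (\<forall>u \<in> V. \<forall>w \<in> V. adj\<^sup>*\<^sup>* u w)"

definition bipartite :: "'v set \<Rightarrow> ('v \<Rightarrow> 'v \<Rightarrow> bool) \<Rightarrow> bool" where
  "bipartite V adj \<longleftrightarrow> (\<exists>X Y. X \<union> Y = V \<and> X \<inter> Y = {} \<and>
     (\<forall>u w. adj u w \<longrightarrow> (u \<in> X \<and> w \<in> Y) \<or> (u \<in> Y \<and> w \<in> X)))"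

definition edges :: "'v set \<Rightarrow> ('v \<Rightarrow> 'v \<Rightarrow> bool) \<Rightarrow> 'v set set" where
  "edges V adj = {{u, w} | u w. adj u w}"

text \<open>Vertices of Q(G): Inl v for the original vertices v, Inr e for the new vertex
inserted into the edge e.\<close>

definition Q_vertices :: "'v set \<Rightarrow> ('v \<Rightarrow> 'v \<Rightarrow> bool) \<Rightarrow> ('v + 'v set) set" where
  "Q_vertices V adj = Inl ` V \<union> Inr ` edges V adj"

fun Q_adj :: "'v set \<Rightarrow> ('v \<Rightarrow> 'v \<Rightarrow> bool) \<Rightarrow> ('v + 'v set) \<Rightarrow> ('v + 'v set) \<Rightarrow> bool" where
  "Q_adj V adj (Inl u) (Inl w) = False"
| "Q_adj V adj (Inl u) (Inr e) = (e \<in> edges V adj \<and> u \<in> e)"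
| "Q_adj V adj (Inr e) (Inl u) = (e \<in> edges V adj \<and> u \<in> e)"
| "Q_adj V adj (Inr e) (Inr f) = (e \<in> edges V adj \<and> f \<in> edges V adj \<and> e \<noteq> f \<and> e \<inter> f \<noteq> {})"

definition laplacian :: "'v set \<Rightarrow> ('v \<Rightarrow> 'v \<Rightarrow> bool) \<Rightarrow> 'v \<Rightarrow> 'v \<Rightarrow> real" where
  "laplacian V adj u w = (if u \<in> V \<and> w \<in> V then
      (if u = w then real (degree V adj u) else if adj u w then -1 else 0) else 0)"

definition mat_mult :: "'v set \<Rightarrow> ('v \<Rightarrow> 'v \<Rightarrow> 'a::comm_semiring_0) \<Rightarrow> ('v \<Rightarrow> 'v \<Rightarrow> 'a) \<Rightarrow> 'v \<Rightarrow> 'v \<Rightarrow> 'a" where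
  "mat_mult S A B i j = (\<Sum>k\<in>S. A i k * B k j)"

definition mat_id :: "'v set \<Rightarrow> 'v \<Rightarrow> 'v \<Rightarrow> 'a::{zero,one}" where
  "mat_id S i j = (if i = j \<and> i \<in> S then 1 else 0)"

fun mat_pow :: "'v set \<Rightarrow> ('v \<Rightarrow> 'v \<Rightarrow> 'a::comm_semiring_1) \<Rightarrow> nat \<Rightarrow> 'v \<Rightarrow> 'v \<Rightarrow> 'a" where
  "mat_pow S A 0 = mat_id S"
| "mat_pow S A (Suc k) = mat_mult S A (mat_pow S A k)"

definition mat_exp :: "'v set \<Rightarrow> ('v \<Rightarrow> 'v \<Rightarrow> complex) \<Rightarrow> 'v \<Rightarrow> 'v \<Rightarrow> complex" where
  "mat_exp S A i j = (\<Sum>k. mat_pow S A k i j / of_nat (fact k))"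

definition mat_vec :: "'v set \<Rightarrow> ('v \<Rightarrow> 'v \<Rightarrow> 'a::comm_semiring_0) \<Rightarrow> ('v \<Rightarrow> 'a) \<Rightarrow> 'v \<Rightarrow> 'a" where
  "mat_vec S A x i = (\<Sum>j\<in>S. A i j * x j)"

definition bilin :: "'v set \<Rightarrow> ('v \<Rightarrow> 'a::comm_semiring_0) \<Rightarrow> ('v \<Rightarrow> 'v \<Rightarrow> 'a) \<Rightarrow> ('v \<Rightarrow> 'a) \<Rightarrow> 'a" where
  "bilin S x M y = (\<Sum>i\<in>S. \<Sum>j\<in>S. x i * M i j * y j)"

definition unit_vec :: "'v \<Rightarrow> 'v \<Rightarrow> 'a::{zero,one}" where
  "unit_vec u v = (if v = u then 1 else 0)"

definition supported :: "'v set \<Rightarrow> ('v \<Rightarrow> real) \<Rightarrow> bool" where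
  "supported S x \<longleftrightarrow> (\<forall>i. i \<notin> S \<longrightarrow> x i = 0)"

definition eigenspace :: "'v set \<Rightarrow> ('v \<Rightarrow> 'v \<Rightarrow> real) \<Rightarrow> real \<Rightarrow> ('v \<Rightarrow> real) set" where
  "eigenspace S A \<theta> = {x. supported S x \<and> (\<forall>i\<in>S. mat_vec S A x i = \<theta> * x i)}"

definition spectrum :: "'v set \<Rightarrow> ('v \<Rightarrow> 'v \<Rightarrow> real) \<Rightarrow> real set" where
  "spectrum S A = {\<theta>. \<exists>x \<in> eigenspace S A \<theta>. \<exists>i \<in> S. x i \<noteq> 0}"

definition lap_spectrum :: "'v set \<Rightarrow> ('v \<Rightarrow> 'v \<Rightarrow> bool) \<Rightarrow> real set" where
  "lap_spectrum V adj = spectrum V (laplacian V adj)"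

definition inner_S :: "'v set \<Rightarrow> ('v \<Rightarrow> real) \<Rightarrow> ('v \<Rightarrow> real) \<Rightarrow> real" where
  "inner_S S x y = (\<Sum>i\<in>S. x i * y i)"

definition eig_proj :: "'v set \<Rightarrow> ('v \<Rightarrow> 'v \<Rightarrow> real) \<Rightarrow> real \<Rightarrow> 'v \<Rightarrow> 'v \<Rightarrow> real" where
  "eig_proj S A \<theta> = (THE P. (\<forall>i j. P i j \<noteq> 0 \<longrightarrow> i \<in> S \<and> j \<in> S)
      \<and> (\<forall>x \<in> eigenspace S A \<theta>. \<forall>i\<in>S. mat_vec S P x i = x i)
      \<and> (\<forall>y. supported S y \<and> (\<forall>x \<in> eigenspace S A \<theta>. inner_S S x y = 0)
             \<longrightarrow> (\<forall>i\<in>S. mat_vec S P y i = 0)))"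

definition lap_proj :: "'v set \<Rightarrow> ('v \<Rightarrow> 'v \<Rightarrow> bool) \<Rightarrow> real \<Rightarrow> 'v \<Rightarrow> 'v \<Rightarrow> real" where
  "lap_proj V adj \<theta> = eig_proj V (laplacian V adj) \<theta>"

definition Delta_Q :: "nat \<Rightarrow> real \<Rightarrow> real" where
  "Delta_Q r \<theta> = sqrt ((real r + 2 - \<theta>)\<^sup>2 + 4 * \<theta>)"

end

theory Submission
  imports Defs "HOL-Library.Function_Algebras" "HOL-Analysis.Analysis"
begin

(*
  For a theta-eigenvector u of L_G let u_V be u on the original vertices
  (0 on the new ones) and u_E the vector taking the value u p + u q at the vertex inserted
  into the edge {p, q}.  In an r-regular graph L_Q u_V = r u_V - u_E and
  L_Q u_E = (theta + 2) u_E - (2r - theta) u_V, so span {u_V, u_E} is L_Q-invariant, with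
  eigenvalues (r + 2 + theta +- Delta_theta) / 2 and eigenvectors (theta + 2 - lambda) u_V + u_E.
  Since u_V is the difference of these two eigenvectors divided by Delta_theta, the walk
  exp (-i t L_Q) u_V can be read off on the original vertices.  Splitting e_c - e_d into
  the pieces F_theta (e_c - e_d) by the spectral theorem for the symmetric matrix L_G
  (proved below by maximizing the Rayleigh quotient) gives the formula.
*)

section \<open>Vectors and matrices on a finite index set\<close>

lemma sum_mult_unit_vec:
  fixes f :: "'v \<Rightarrow> 'a::semiring_1"
  assumes "finite S" "j \<in> S"
  shows "(\<Sum>i\<in>S. f i * unit_vec j i) = f j"
proof -
  have "(\<Sum>i\<in>S. f i * unit_vec j i) = (\<Sum>i\<in>S. if i = j then f i else 0)"
    by (rule sum.cong) (auto simp: unit_vec_def)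
  then show ?thesis
    using assms by simp
qed

lemma sum_mult_unit_vec_swapped:
  fixes f :: "'v \<Rightarrow> 'a::semiring_1"
  assumes "finite S" "j \<in> S"
  shows "(\<Sum>i\<in>S. f i * unit_vec i j) = f j"
proof -
  have "(\<Sum>i\<in>S. f i * unit_vec i j) = (\<Sum>i\<in>S. if i = j then f i else 0)"
    by (rule sum.cong) (auto simp: unit_vec_def)
  then show ?thesis
    using assms by simp
qed

lemma sum_unit_vec_diff_mult:
  fixes w :: "'v \<Rightarrow> 'a::comm_ring_1"
  assumes "finite S" "a \<in> S" "b \<in> S"
  shows "(\<Sum>i\<in>S. (unit_vec a i - unit_vec b i) * w i) = w a - w b"
  using sum_mult_unit_vec[OF assms(1,2), of w] sum_mult_unit_vec[OF assms(1,3), of w]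
  by (simp add: right_diff_distrib sum_subtractf mult.commute)

lemma bilin_conv_mat_vec: "bilin S x P y = (\<Sum>i\<in>S. x i * mat_vec S P y i)"
  unfolding bilin_def mat_vec_def by (simp add: sum_distrib_left mult.assoc)

lemma mat_vec_lincomb:
  fixes P :: "'v \<Rightarrow> 'v \<Rightarrow> 'a::comm_ring_1"
  shows "mat_vec S P (\<lambda>j. a * x j + b * y j) k = a * mat_vec S P x k + b * mat_vec S P y k"
  unfolding mat_vec_def by (simp add: algebra_simps sum.distrib sum_distrib_left)

lemma mat_vec_sum:
  fixes P :: "'v \<Rightarrow> 'v \<Rightarrow> 'a::comm_semiring_0"
  shows "mat_vec S P (\<lambda>j. \<Sum>\<theta>\<in>F. g \<theta> j) k = (\<Sum>\<theta>\<in>F. mat_vec S P (g \<theta>) k)"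
  unfolding mat_vec_def by (simp add: sum_distrib_left sum.swap[of _ F])

lemma inner_S_scale_left: "inner_S S (\<lambda>i. k * x i) y = k * inner_S S x y"
  unfolding inner_S_def by (simp add: sum_distrib_left mult.assoc)

lemma inner_S_scale_right: "inner_S S x (\<lambda>i. k * y i) = k * inner_S S x y"
  unfolding inner_S_def by (simp add: sum_distrib_left mult_ac)

lemma mat_vec_scale:
  fixes P :: "'v \<Rightarrow> 'v \<Rightarrow> 'a::comm_semiring_0"
  shows "mat_vec S P (\<lambda>j. k * x j) i = k * mat_vec S P x i"
  unfolding mat_vec_def by (simp add: sum_distrib_left mult_ac)

lemma inner_S_sum_right: "inner_S S x (\<lambda>k. \<Sum>\<theta>\<in>F. g \<theta> k) = (\<Sum>\<theta>\<in>F. inner_S S x (g \<theta>))"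
  unfolding inner_S_def by (simp add: sum_distrib_left) (rule sum.swap)

lemma inner_S_add_scale:
  "inner_S S (\<lambda>i. x i + s * w i) (\<lambda>i. a i + s * b i)
     = inner_S S x a + s * inner_S S x b + s * inner_S S w a + s\<^sup>2 * inner_S S w b"
  unfolding inner_S_def by (simp add: algebra_simps sum.distrib sum_distrib_left power2_eq_square)

lemma inner_S_commute: "inner_S S x y = inner_S S y x"
  unfolding inner_S_def by (simp add: mult.commute)

lemma inner_S_self_nonneg: "inner_S S x x \<ge> 0"
  unfolding inner_S_def by (intro sum_nonneg) auto

lemma inner_S_self_eq_0_iff:
  assumes "finite S"
  shows "inner_S S x x = 0 \<longleftrightarrow> (\<forall>i\<in>S. x i = 0)"
  using assms sum_nonneg_eq_0_iff[of S "\<lambda>i. x i * x i"] unfolding inner_S_def by auto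

lemma inner_S_self_pos:
  assumes "finite S" "i \<in> S" "x i \<noteq> 0"
  shows "inner_S S x x > 0"
  using assms inner_S_self_nonneg[of S x] inner_S_self_eq_0_iff[of S x]
  by (auto simp: order_less_le)

lemma finite_orthogonal_family:
  assumes "finite S"
    and supp: "\<And>x. x \<in> T \<Longrightarrow> supported S x"
    and nonzero: "\<And>x. x \<in> T \<Longrightarrow> inner_S S x x \<noteq> 0"
    and orth: "\<And>x y. x \<in> T \<Longrightarrow> y \<in> T \<Longrightarrow> x \<noteq> y \<Longrightarrow> inner_S S x y = 0"
  shows "finite T"
proof -
  interpret vs: vector_space "\<lambda>c (f::'v \<Rightarrow> real) i. c * f i"
    by unfold_locales (auto simp: algebra_simps fun_eq_iff)
  have "x \<in> vs.span (unit_vec ` S)" if "x \<in> T" for x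
  proof -
    have "x = (\<Sum>j\<in>S. (\<lambda>i. x j * unit_vec j i))"
    proof
      fix i
      have "(\<Sum>j\<in>S. (\<lambda>i. x j * unit_vec j i)) i = (\<Sum>j\<in>S. if j = i then x j else 0)"
        by (induction S rule: infinite_finite_induct) (auto simp: unit_vec_def)
      then show "x i = (\<Sum>j\<in>S. (\<lambda>i. x j * unit_vec j i)) i"
        using assms(1) supp[OF that] unfolding supported_def by auto
    qed
    also have "\<dots> \<in> vs.span (unit_vec ` S)"
      by (intro vs.span_sum vs.span_scale vs.span_base) auto
    finally show ?thesis .
  qed
  moreover have "vs.independent T"
    unfolding vs.independent_explicit_module
  proof (intro allI impI)
    fix F c x
    assume F: "finite F" "F \<subseteq> T" "(\<Sum>y\<in>F. (\<lambda>i. c y * y i)) = 0" "x \<in> F"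
    have "0 = (\<Sum>i\<in>S. x i * (\<Sum>y\<in>F. (\<lambda>i. c y * y i)) i)"
      using F(3) by simp
    also have "\<dots> = (\<Sum>y\<in>F. c y * inner_S S x y)"
      unfolding inner_S_def
      by (induction F rule: infinite_finite_induct)
        (auto simp: sum.distrib sum_distrib_left algebra_simps)
    also have "\<dots> = c x * inner_S S x x + (\<Sum>y\<in>F - {x}. c y * inner_S S x y)"
      using F by (simp add: sum.remove)
    also have "(\<Sum>y\<in>F - {x}. c y * inner_S S x y) = 0"
      using F orth by (intro sum.neutral) auto
    finally show "c x = 0"
      using nonzero F by auto
  qed
  ultimately show ?thesis
    using vs.independent_span_bound[of "unit_vec ` S" T] assms(1) by auto
qed

lemma linear_coeff_eq_0_if_quadratic_nonpos:
  fixes a b :: real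
  assumes "\<And>s. 2 * s * a + s\<^sup>2 * b \<le> 0"
  shows "a = 0"
proof (rule ccontr)
  assume "a \<noteq> 0"
  define c where "c = \<bar>b\<bar> + 1"
  have c: "c > 0" "2 * c + b > 0"
    unfolding c_def by auto
  have "(2 * (a / c) * a + (a / c)\<^sup>2 * b) * c\<^sup>2 \<le> 0"
    using assms[of "a / c"] by (simp add: mult_nonpos_nonneg)
  also have "(2 * (a / c) * a + (a / c)\<^sup>2 * b) * c\<^sup>2 = a\<^sup>2 * (2 * c + b)"
    using c by (simp add: field_simps power2_eq_square)
  finally show False
    using \<open>a \<noteq> 0\<close> c by (simp add: mult_le_0_iff)
qed

lemma compactin_supported_cube:
  "compactin (product_topology (\<lambda>_. euclideanreal) UNIV) {x. supported S x \<and> (\<forall>i. \<bar>x i\<bar> \<le> 1)}"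
proof -
  have "{x. supported S x \<and> (\<forall>i. \<bar>x i\<bar> \<le> 1)} = PiE UNIV (\<lambda>i. if i \<in> S then {-1..1} else {0})"
    unfolding supported_def PiE_def Pi_def by (force simp: abs_le_iff)
  then show ?thesis
    by (simp add: compactin_PiE)
qed

lemma abs_le_1_if_inner_S_self_eq_1:
  assumes "finite S" "supported S x" "inner_S S x x = 1"
  shows "\<bar>x i\<bar> \<le> 1"
proof (cases "i \<in> S")
  case True
  have "x i * x i \<le> inner_S S x x"
    unfolding inner_S_def by (rule member_le_sum[OF True _ assms(1)]) auto
  then show ?thesis
    using assms(3) abs_square_le_1[of "x i"] by (simp add: power2_eq_square)
next
  case False
  then show ?thesis
    using assms(2) unfolding supported_def by simp
qed

primrec shifted_prod_vec ::
  "'v set \<Rightarrow> ('v \<Rightarrow> 'v \<Rightarrow> real) \<Rightarrow> real list \<Rightarrow> ('v \<Rightarrow> real) \<Rightarrow> 'v \<Rightarrow> real" where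
  "shifted_prod_vec S A [] z = z"
| "shifted_prod_vec S A (t # ts) z =
     (\<lambda>i. mat_vec S A (shifted_prod_vec S A ts z) i - t * shifted_prod_vec S A ts z i)"

section \<open>Spectral theorem for symmetric matrices\<close>

locale sym_matrix =
  fixes S :: "'v set" and A :: "'v \<Rightarrow> 'v \<Rightarrow> real"
  assumes finite_S: "finite S"
    and symmetric: "A i j = A j i"
    and support: "A i j \<noteq> 0 \<Longrightarrow> i \<in> S \<and> j \<in> S"
begin

abbreviation Av :: "('v \<Rightarrow> real) \<Rightarrow> 'v \<Rightarrow> real" where
  "Av x \<equiv> mat_vec S A x"

abbreviation ip :: "('v \<Rightarrow> real) \<Rightarrow> ('v \<Rightarrow> real) \<Rightarrow> real" where
  "ip x y \<equiv> inner_S S x y"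

lemma supported_Av: "supported S (Av x)"
proof -
  have "A i j = 0" if "i \<notin> S" for i j
    using support that by blast
  then show ?thesis
    unfolding supported_def mat_vec_def by simp
qed

lemma inner_Av_commute: "ip u (Av x) = ip (Av u) x"
proof -
  have "ip u (Av x) = (\<Sum>i\<in>S. \<Sum>j\<in>S. u i * A i j * x j)"
    unfolding inner_S_def mat_vec_def by (simp add: sum_distrib_left mult.assoc)
  also have "\<dots> = (\<Sum>j\<in>S. \<Sum>i\<in>S. u i * A j i * x j)"
    by (subst sum.swap) (simp add: symmetric)
  also have "\<dots> = ip (Av u) x"
    unfolding inner_S_def mat_vec_def by (simp add: sum_distrib_left sum_distrib_right mult_ac)
  finally show ?thesis .
qed

lemma eigenspaceD: "x \<in> eigenspace S A \<theta> \<Longrightarrow> i \<in> S \<Longrightarrow> Av x i = \<theta> * x i"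
  unfolding eigenspace_def by auto

lemma eigenspace_supported: "x \<in> eigenspace S A \<theta> \<Longrightarrow> supported S x"
  unfolding eigenspace_def by auto

lemma zero_in_eigenspace: "(\<lambda>_. 0) \<in> eigenspace S A \<theta>"
  unfolding eigenspace_def supported_def mat_vec_def by auto

lemma inner_eigenvector_Av:
  assumes "u \<in> eigenspace S A \<theta>"
  shows "ip u (Av y) = \<theta> * ip u y"
proof -
  have "ip u (Av y) = ip (Av u) y"
    by (rule inner_Av_commute)
  also have "\<dots> = \<theta> * ip u y"
    unfolding inner_S_def using eigenspaceD[OF assms]
    by (simp add: sum_distrib_left mult.assoc)
  finally show ?thesis .
qed

lemma eigenspaces_orthogonal:
  assumes "x \<in> eigenspace S A \<theta>" "y \<in> eigenspace S A \<mu>" "\<theta> \<noteq> \<mu>"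
  shows "ip x y = 0"
proof -
  have "\<theta> * ip x y = \<mu> * ip x y"
    using inner_eigenvector_Av[OF assms(1), of y] inner_eigenvector_Av[OF assms(2), of x]
      inner_Av_commute[of x y] inner_S_commute[of S]
    by metis
  then show ?thesis
    using assms(3) by simp
qed

lemma eigenvector_outside_spectrum:
  "\<theta> \<notin> spectrum S A \<Longrightarrow> x \<in> eigenspace S A \<theta> \<Longrightarrow> i \<in> S \<Longrightarrow> x i = 0"
  unfolding spectrum_def by auto

lemma finite_spectrum: "finite (spectrum S A)"
proof -
  have "\<forall>\<theta>\<in>spectrum S A. \<exists>x. x \<in> eigenspace S A \<theta> \<and> (\<exists>i\<in>S. x i \<noteq> 0)"
    unfolding spectrum_def by auto
  then obtain ev where ev: "\<And>\<theta>. \<theta> \<in> spectrum S A \<Longrightarrow> ev \<theta> \<in> eigenspace S A \<theta>"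
    "\<And>\<theta>. \<theta> \<in> spectrum S A \<Longrightarrow> \<exists>i\<in>S. ev \<theta> i \<noteq> 0"
    by metis
  have inj: "inj_on ev (spectrum S A)"
  proof (rule inj_onI)
    fix \<theta> \<mu> assume "\<theta> \<in> spectrum S A" "\<mu> \<in> spectrum S A" "ev \<theta> = ev \<mu>"
    moreover obtain i where "i \<in> S" "ev \<theta> i \<noteq> 0"
      using ev(2) \<open>\<theta> \<in> spectrum S A\<close> by blast
    ultimately show "\<theta> = \<mu>"
      using eigenspaceD[OF ev(1)] by (metis mult_right_cancel)
  qed
  have "finite (ev ` spectrum S A)"
  proof (rule finite_orthogonal_family[OF finite_S])
    show "supported S x" if "x \<in> ev ` spectrum S A" for x
      using that ev(1) eigenspace_supported by blast
    show "ip x x \<noteq> 0" if "x \<in> ev ` spectrum S A" for x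
      using that ev(2) inner_S_self_pos[OF finite_S] by fastforce
    show "ip x y = 0" if "x \<in> ev ` spectrum S A" "y \<in> ev ` spectrum S A" "x \<noteq> y" for x y
      using that ev(1) eigenspaces_orthogonal by blast
  qed
  then show ?thesis
    using finite_image_iff[OF inj] by blast
qed

definition eig_perp :: "('v \<Rightarrow> real) set" where
  "eig_perp = {x. supported S x \<and> (\<forall>\<theta>. \<forall>u\<in>eigenspace S A \<theta>. ip u x = 0)}"

lemma eig_perp_lincomb:
  assumes "x \<in> eig_perp" "w \<in> eig_perp"
  shows "(\<lambda>i. x i + s * w i) \<in> eig_perp"
  using assms unfolding eig_perp_def supported_def inner_S_def
  by (auto simp: algebra_simps sum.distrib sum_distrib_left[symmetric])

lemma compactin_unit_eig_perp:
  "compactin (product_topology (\<lambda>_. euclideanreal) UNIV) {x \<in> eig_perp. ip x x = 1}"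
proof -
  define X where "X = product_topology (\<lambda>_::'v. euclideanreal) UNIV"
  define U where "U = (\<Union>\<theta>. eigenspace S A \<theta>)"
  define C where "C = {x \<in> topspace X. ip x x \<in> {1}} \<inter> (\<Inter>u\<in>U. {x \<in> topspace X. ip u x \<in> {0}})"
  have coord: "continuous_map X euclideanreal (\<lambda>x. x i)" for i
    unfolding X_def by (rule continuous_map_product_projection) simp
  have "U \<noteq> {}"
    unfolding U_def using zero_in_eigenspace by blast
  have cont_ip: "continuous_map X euclideanreal (\<lambda>x. ip u x)" for u
    unfolding inner_S_def
    by (intro continuous_map_sum finite_S continuous_map_real_mult coord continuous_map_canonical_const)
  have "continuous_map X euclideanreal (\<lambda>x. ip x x)"
    unfolding inner_S_def by (intro continuous_map_sum finite_S continuous_map_real_mult coord)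
  then have "closedin X {x \<in> topspace X. ip x x \<in> {1}}"
    by (rule closedin_continuous_map_preimage) simp
  moreover have "closedin X {x \<in> topspace X. ip u x \<in> {0}}" for u
    by (rule closedin_continuous_map_preimage[OF cont_ip]) simp
  ultimately have "closedin X C"
    unfolding C_def using \<open>U \<noteq> {}\<close> by (intro closedin_Int closedin_INT)
  moreover have "{x \<in> eig_perp. ip x x = 1} = C \<inter> {x. supported S x \<and> (\<forall>i. \<bar>x i\<bar> \<le> 1)}"
    using abs_le_1_if_inner_S_self_eq_1[OF finite_S]
    unfolding C_def U_def X_def eig_perp_def by auto
  ultimately show ?thesis
    unfolding X_def by (simp add: closed_Int_compactin compactin_supported_cube)
qed

lemma normalize_eig_perp:
  assumes "z \<in> eig_perp" "ip z z > 0"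
  defines "k \<equiv> inverse (sqrt (ip z z))"
  shows "(\<lambda>i. k * z i) \<in> eig_perp" "ip (\<lambda>i. k * z i) (\<lambda>i. k * z i) = 1"
    "ip (\<lambda>i. k * z i) (Av (\<lambda>i. k * z i)) = ip z (Av z) / ip z z"
proof -
  have k2: "k * k * ip z z = 1"
    using assms(2) by (simp add: k_def inverse_mult_distrib[symmetric])
  show "(\<lambda>i. k * z i) \<in> eig_perp"
    using assms(1) unfolding eig_perp_def supported_def by (auto simp: inner_S_scale_right)
  show "ip (\<lambda>i. k * z i) (\<lambda>i. k * z i) = 1"
    using k2 by (simp add: inner_S_scale_left inner_S_scale_right)
  have "Av (\<lambda>i. k * z i) = (\<lambda>i. k * Av z i)"
    by (simp add: fun_eq_iff mat_vec_scale)
  then show "ip (\<lambda>i. k * z i) (Av (\<lambda>i. k * z i)) = ip z (Av z) / ip z z"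
    using k2 assms(2) by (simp add: inner_S_scale_left inner_S_scale_right field_simps)
qed

lemma rayleigh_maximizer:
  assumes "y \<in> eig_perp" "i \<in> S" "y i \<noteq> 0"
  obtains xm where "xm \<in> eig_perp" "ip xm xm = 1"
    "\<And>z. z \<in> eig_perp \<Longrightarrow> ip z (Av z) \<le> ip xm (Av xm) * ip z z"
proof -
  define K where "K = {x \<in> eig_perp. ip x x = 1}"
  define R where "R x = ip x (Av x)" for x
  have "continuous_map (product_topology (\<lambda>_. euclideanreal) UNIV) euclideanreal (\<lambda>x. x i)" for i
    by (rule continuous_map_product_projection) simp
  then have "continuous_map (product_topology (\<lambda>_. euclideanreal) UNIV) euclideanreal R"
    unfolding R_def inner_S_def mat_vec_def
    by (intro continuous_map_sum finite_S continuous_map_real_mult continuous_map_canonical_const)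
  then have "compactin euclideanreal (R ` K)"
    unfolding K_def by (rule image_compactin[OF compactin_unit_eig_perp])
  then have "compact (R ` K)"
    by simp
  moreover have "K \<noteq> {}"
    using normalize_eig_perp(1,2)[OF assms(1) inner_S_self_pos[of S i y, OF finite_S assms(2,3)]]
    unfolding K_def by blast
  ultimately obtain xm where "xm \<in> K" and xm_max: "\<And>x. x \<in> K \<Longrightarrow> R x \<le> R xm"
    using compact_attains_sup[of "R ` K"] by blast
  show ?thesis
  proof (rule that)
    show "xm \<in> eig_perp" "ip xm xm = 1"
      using \<open>xm \<in> K\<close> unfolding K_def by auto
    fix z assume "z \<in> eig_perp"
    show "ip z (Av z) \<le> ip xm (Av xm) * ip z z"
    proof (cases "ip z z = 0")
      case True
      then have "\<forall>i\<in>S. z i = 0"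
        using inner_S_self_eq_0_iff[OF finite_S] by blast
      then show ?thesis
        using True unfolding inner_S_def by simp
    next
      case False
      then have pos: "ip z z > 0"
        using inner_S_self_nonneg[of S z] by simp
      let ?x = "\<lambda>i. inverse (sqrt (ip z z)) * z i"
      have "ip ?x (Av ?x) \<le> ip xm (Av xm)"
        using xm_max[of ?x] normalize_eig_perp(1,2)[OF \<open>z \<in> eig_perp\<close> pos]
        unfolding K_def R_def by blast
      then show ?thesis
        using pos unfolding normalize_eig_perp(3)[OF \<open>z \<in> eig_perp\<close> pos]
        by (simp add: divide_le_eq mult.commute)
    qed
  qed
qed

lemma rayleigh_expand:
  "ip (\<lambda>i. x i + s * w i) (Av (\<lambda>i. x i + s * w i))
     = ip x (Av x) + 2 * s * ip w (Av x) + s\<^sup>2 * ip w (Av w)"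
proof -
  have "Av (\<lambda>i. x i + s * w i) = (\<lambda>i. Av x i + s * Av w i)"
    using mat_vec_lincomb[of S A 1 x s w] by (simp add: fun_eq_iff)
  moreover have "ip x (Av w) = ip w (Av x)"
    using inner_Av_commute inner_S_commute by metis
  ultimately show ?thesis
    by (simp add: inner_S_add_scale)
qed

lemma rayleigh_stationary:
  assumes xm: "xm \<in> eig_perp" "ip xm xm = 1"
    and max: "\<And>z. z \<in> eig_perp \<Longrightarrow> ip z (Av z) \<le> ip xm (Av xm) * ip z z"
    and w: "w \<in> eig_perp"
  shows "ip w (Av xm) = ip xm (Av xm) * ip w xm"
proof -
  define M where "M = ip xm (Av xm)"
  have "2 * s * (ip w (Av xm) - M * ip w xm) + s\<^sup>2 * (ip w (Av w) - M * ip w w) \<le> 0" for s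
  proof -
    have "ip (\<lambda>i. xm i + s * w i) (\<lambda>i. xm i + s * w i) = 1 + 2 * s * ip w xm + s\<^sup>2 * ip w w"
      using xm(2) inner_S_commute[of S xm w] by (simp add: inner_S_add_scale)
    moreover have "ip (\<lambda>i. xm i + s * w i) (Av (\<lambda>i. xm i + s * w i))
        \<le> M * ip (\<lambda>i. xm i + s * w i) (\<lambda>i. xm i + s * w i)"
      unfolding M_def by (rule max[OF eig_perp_lincomb[OF xm(1) w]])
    ultimately show ?thesis
      unfolding rayleigh_expand M_def by (simp add: algebra_simps)
  qed
  then have "ip w (Av xm) - M * ip w xm = 0"
    by (rule linear_coeff_eq_0_if_quadratic_nonpos)
  then show ?thesis
    unfolding M_def by simp
qed

text \<open>Completeness of the eigenvectors: a maximizer of the Rayleigh quotient on the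
  orthogonal complement of all eigenvectors would itself be an eigenvector.\<close>

lemma eig_perp_eq_0:
  assumes "y \<in> eig_perp" "i \<in> S"
  shows "y i = 0"
proof (rule ccontr)
  assume "y i \<noteq> 0"
  then obtain xm where xm: "xm \<in> eig_perp" "ip xm xm = 1"
    and max: "\<And>z. z \<in> eig_perp \<Longrightarrow> ip z (Av z) \<le> ip xm (Av xm) * ip z z"
    using rayleigh_maximizer[OF assms] by blast
  define M where "M = ip xm (Av xm)"
  define w where "w = (\<lambda>j. Av xm j - M * xm j)"
  have ip_w: "ip u w = ip u (Av xm) - M * ip u xm" for u
    unfolding w_def inner_S_def by (simp add: sum_subtractf right_diff_distrib sum_distrib_left mult_ac)
  have "w \<in> eig_perp"
  proof -
    have "supported S w"
      using supported_Av[of xm] xm(1) unfolding w_def eig_perp_def supported_def by simp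
    moreover have "ip u w = 0" if "u \<in> eigenspace S A \<theta>" for u \<theta>
      using xm(1) that unfolding ip_w inner_eigenvector_Av[OF that] eig_perp_def by simp
    ultimately show ?thesis
      unfolding eig_perp_def by blast
  qed
  then have "ip w w = 0"
    using rayleigh_stationary[OF xm max] unfolding ip_w M_def by simp
  then have "\<forall>j\<in>S. w j = 0"
    using inner_S_self_eq_0_iff[OF finite_S] by blast
  then have "xm \<in> eigenspace S A M"
    using xm(1) unfolding eigenspace_def eig_perp_def w_def by simp
  then have "ip xm xm = 0"
    using xm(1) unfolding eig_perp_def by blast
  with xm(2) show False
    by simp
qed

abbreviation prodA :: "real list \<Rightarrow> ('v \<Rightarrow> real) \<Rightarrow> 'v \<Rightarrow> real" where
  "prodA ts z \<equiv> shifted_prod_vec S A ts z"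

lemma shifted_prod_eigenvector:
  assumes "x \<in> eigenspace S A \<theta>" "i \<in> S"
  shows "prodA ts x i = (\<Prod>t\<leftarrow>ts. \<theta> - t) * x i"
  using assms(2)
proof (induction ts arbitrary: i)
  case Nil
  then show ?case by simp
next
  case (Cons t ts)
  have "Av (prodA ts x) i = Av (\<lambda>j. (\<Prod>t\<leftarrow>ts. \<theta> - t) * x j) i"
    unfolding mat_vec_def using Cons.IH by (intro sum.cong) auto
  also have "\<dots> = (\<Prod>t\<leftarrow>ts. \<theta> - t) * \<theta> * x i"
    using eigenspaceD[OF assms(1) Cons.prems] by (simp add: mat_vec_scale)
  finally show ?case
    using Cons by (simp add: algebra_simps)
qed

lemma inner_eigenvector_shifted_prod:
  assumes "u \<in> eigenspace S A \<theta>"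
  shows "ip u (prodA ts y) = (\<Prod>t\<leftarrow>ts. \<theta> - t) * ip u y"
proof (induction ts)
  case Nil
  then show ?case by simp
next
  case (Cons t ts)
  have "ip u (prodA (t # ts) y) = ip u (Av (prodA ts y)) - t * ip u (prodA ts y)"
    unfolding inner_S_def by (simp add: algebra_simps sum_subtractf sum_distrib_left)
  then show ?case
    using Cons inner_eigenvector_Av[OF assms] by (simp add: algebra_simps)
qed

lemma supported_shifted_prod: "supported S z \<Longrightarrow> supported S (prodA ts z)"
  by (induction ts) (use supported_Av in \<open>auto simp: supported_def\<close>)

lemma shifted_prod_cong:
  "(\<And>k. k \<in> S \<Longrightarrow> z k = z' k) \<Longrightarrow> i \<in> S \<Longrightarrow> prodA ts z i = prodA ts z' i"
proof (induction ts arbitrary: i)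
  case Nil
  then show ?case by simp
next
  case (Cons t ts)
  then have "Av (prodA ts z) i = Av (prodA ts z') i"
    unfolding mat_vec_def by (intro sum.cong) auto
  then show ?case
    using Cons by simp
qed

lemma shifted_prod_sum:
  assumes "finite J"
  shows "prodA ts (\<lambda>k. \<Sum>j\<in>J. c j * g j k) = (\<lambda>k. \<Sum>j\<in>J. c j * prodA ts (g j) k)"
proof (induction ts)
  case Nil
  then show ?case by simp
next
  case (Cons t ts)
  have "Av (\<lambda>k. \<Sum>j\<in>J. c j * prodA ts (g j) k) i = (\<Sum>j\<in>J. c j * Av (prodA ts (g j)) i)" for i
    by (simp add: mat_vec_sum mat_vec_scale)
  then show ?case
    by (simp add: Cons.IH fun_eq_iff sum_subtractf sum_distrib_left algebra_simps)
qed

lemma shifted_prod_spectrum_eq_0: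
  assumes "supported S y" "spectrum S A \<subseteq> set ts" "i \<in> S"
  shows "prodA ts y i = 0"
proof (rule eig_perp_eq_0[OF _ assms(3)])
  have "ip u (prodA ts y) = 0" if "u \<in> eigenspace S A \<mu>" for u \<mu>
  proof (cases "\<mu> \<in> spectrum S A")
    case True
    then have "(\<Prod>t\<leftarrow>ts. \<mu> - t) = 0"
      using assms(2) by (auto simp: prod_list_zero_iff)
    then show ?thesis
      using inner_eigenvector_shifted_prod[OF that] by simp
  next
    case False
    then show ?thesis
      using eigenvector_outside_spectrum[OF False that] unfolding inner_S_def by simp
  qed
  then show "prodA ts y \<in> eig_perp"
    unfolding eig_perp_def using supported_shifted_prod[OF assms(1)] by blast
qed

definition other_eigenvalues :: "real \<Rightarrow> real list" where
  "other_eigenvalues \<theta> = sorted_list_of_set (spectrum S A - {\<theta>})"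

text \<open>\<open>proj_vec \<theta>\<close> applies \<open>\<Prod>\<^sub>\<mu> (A - \<mu>) / (\<theta> - \<mu>)\<close>, \<open>\<mu>\<close> ranging over the rest of the
  spectrum: the Lagrange interpolation polynomial of \<open>\<theta>\<close>, evaluated at A.\<close>

definition proj_vec :: "real \<Rightarrow> ('v \<Rightarrow> real) \<Rightarrow> 'v \<Rightarrow> real" where
  "proj_vec \<theta> y i = (if i \<in> S \<and> \<theta> \<in> spectrum S A
     then prodA (other_eigenvalues \<theta>) y i / (\<Prod>t\<leftarrow>other_eigenvalues \<theta>. \<theta> - t) else 0)"

definition proj_mat :: "real \<Rightarrow> 'v \<Rightarrow> 'v \<Rightarrow> real" where
  "proj_mat \<theta> i j = (if j \<in> S then proj_vec \<theta> (unit_vec j) i else 0)"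

lemma set_other_eigenvalues: "set (other_eigenvalues \<theta>) = spectrum S A - {\<theta>}"
  unfolding other_eigenvalues_def using finite_spectrum by simp

lemma lagrange_denominator_nonzero: "(\<Prod>t\<leftarrow>other_eigenvalues \<theta>. \<theta> - t) \<noteq> 0"
  using set_other_eigenvalues by (auto simp: prod_list_zero_iff)

lemma mat_vec_proj_mat: "mat_vec S (proj_mat \<theta>) y i = proj_vec \<theta> y i"
proof (cases "i \<in> S \<and> \<theta> \<in> spectrum S A")
  case True
  have "(\<Sum>j\<in>S. y j * prodA (other_eigenvalues \<theta>) (unit_vec j) i)
      = prodA (other_eigenvalues \<theta>) (\<lambda>k. \<Sum>j\<in>S. y j * unit_vec j k) i"
    by (simp add: shifted_prod_sum[OF finite_S])
  also have "\<dots> = prodA (other_eigenvalues \<theta>) y i"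
    using True by (intro shifted_prod_cong) (simp_all add: sum_mult_unit_vec_swapped[OF finite_S])
  finally show ?thesis
    using True unfolding mat_vec_def proj_mat_def proj_vec_def
    by (simp add: mult.commute flip: sum_divide_distrib)
next
  case False
  then show ?thesis
    unfolding mat_vec_def proj_mat_def proj_vec_def by auto
qed

lemma proj_vec_eigenvector:
  assumes "x \<in> eigenspace S A \<theta>" "i \<in> S"
  shows "proj_vec \<theta> x i = x i"
proof (cases "\<theta> \<in> spectrum S A")
  case True
  then show ?thesis
    using shifted_prod_eigenvector[OF assms] lagrange_denominator_nonzero assms(2)
    unfolding proj_vec_def by simp
next
  case False
  then show ?thesis
    using eigenvector_outside_spectrum[OF False assms] unfolding proj_vec_def by simp
qed

lemma proj_vec_in_eigenspace:
  assumes "supported S y"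
  shows "proj_vec \<theta> y \<in> eigenspace S A \<theta>"
proof (cases "\<theta> \<in> spectrum S A")
  case False
  then have "proj_vec \<theta> y = (\<lambda>_. 0)"
    unfolding proj_vec_def by auto
  then show ?thesis
    using zero_in_eigenspace by simp
next
  case True
  define ts where "ts = other_eigenvalues \<theta>"
  have "Av (prodA ts y) i = \<theta> * prodA ts y i" if "i \<in> S" for i
    using shifted_prod_spectrum_eq_0[OF assms _ that, of "\<theta> # ts"] set_other_eigenvalues
    unfolding ts_def by auto
  then have "Av (proj_vec \<theta> y) i = \<theta> * proj_vec \<theta> y i" if "i \<in> S" for i
    using True that unfolding proj_vec_def ts_def mat_vec_def
    by (simp add: sum_divide_distrib[symmetric])
  moreover have "supported S (proj_vec \<theta> y)"
    unfolding proj_vec_def supported_def by auto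
  ultimately show ?thesis
    unfolding eigenspace_def by auto
qed

lemma inner_eigenvector_proj_vec:
  assumes "x \<in> eigenspace S A \<mu>"
  shows "ip x (proj_vec \<theta> y) = (if \<theta> = \<mu> then ip x y else 0)"
proof (cases "\<mu> \<in> spectrum S A \<and> \<theta> \<in> spectrum S A")
  case True
  have "ip x (proj_vec \<theta> y) = ip x (prodA (other_eigenvalues \<theta>) y) / (\<Prod>t\<leftarrow>other_eigenvalues \<theta>. \<theta> - t)"
    using True unfolding proj_vec_def inner_S_def by (simp add: sum_divide_distrib)
  also have "\<dots> = (\<Prod>t\<leftarrow>other_eigenvalues \<theta>. \<mu> - t) / (\<Prod>t\<leftarrow>other_eigenvalues \<theta>. \<theta> - t) * ip x y"
    unfolding inner_eigenvector_shifted_prod[OF assms] by simp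
  also have "\<dots> = (if \<theta> = \<mu> then ip x y else 0)"
    using True lagrange_denominator_nonzero set_other_eigenvalues[of \<theta>]
    by (auto simp: prod_list_zero_iff)
  finally show ?thesis .
next
  case False
  then consider "\<mu> \<notin> spectrum S A" | "\<theta> \<notin> spectrum S A"
    by blast
  then show ?thesis
  proof cases
    case 1
    then show ?thesis
      using eigenvector_outside_spectrum[OF 1 assms] unfolding inner_S_def by simp
  next
    case 2
    then show ?thesis
      using eigenvector_outside_spectrum[of \<mu> x] assms unfolding proj_vec_def inner_S_def by auto
  qed
qed

definition is_eig_projector :: "real \<Rightarrow> ('v \<Rightarrow> 'v \<Rightarrow> real) \<Rightarrow> bool" where
  "is_eig_projector \<theta> P \<longleftrightarrow> (\<forall>i j. P i j \<noteq> 0 \<longrightarrow> i \<in> S \<and> j \<in> S)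
      \<and> (\<forall>x \<in> eigenspace S A \<theta>. \<forall>i\<in>S. mat_vec S P x i = x i)
      \<and> (\<forall>y. supported S y \<and> (\<forall>x \<in> eigenspace S A \<theta>. ip x y = 0)
             \<longrightarrow> (\<forall>i\<in>S. mat_vec S P y i = 0))"

lemma is_eig_projector_proj_mat: "is_eig_projector \<theta> (proj_mat \<theta>)"
  unfolding is_eig_projector_def
proof (intro conjI allI impI ballI)
  show "proj_mat \<theta> i j \<noteq> 0 \<Longrightarrow> i \<in> S" "proj_mat \<theta> i j \<noteq> 0 \<Longrightarrow> j \<in> S" for i j
    unfolding proj_mat_def proj_vec_def by (auto split: if_splits)
  show "mat_vec S (proj_mat \<theta>) x i = x i" if "x \<in> eigenspace S A \<theta>" "i \<in> S" for x i
    using proj_vec_eigenvector[OF that] by (simp add: mat_vec_proj_mat)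
  fix y i
  assume y: "supported S y \<and> (\<forall>x \<in> eigenspace S A \<theta>. ip x y = 0)" and "i \<in> S"
  have "proj_vec \<theta> y \<in> eigenspace S A \<theta>"
    using proj_vec_in_eigenspace y by blast
  then have "ip (proj_vec \<theta> y) (proj_vec \<theta> y) = 0"
    using inner_eigenvector_proj_vec y by simp
  then show "mat_vec S (proj_mat \<theta>) y i = 0"
    using inner_S_self_eq_0_iff[OF finite_S] \<open>i \<in> S\<close> by (simp add: mat_vec_proj_mat)
qed

lemma is_eig_projector_unique:
  assumes P: "is_eig_projector \<theta> P"
  shows "P = proj_mat \<theta>"
proof (intro ext)
  fix i j
  show "P i j = proj_mat \<theta> i j"
  proof (cases "i \<in> S \<and> j \<in> S")
    case False
    then show ?thesis
      using P unfolding is_eig_projector_def proj_mat_def proj_vec_def by auto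
  next
    case True
    define z where "z = proj_vec \<theta> (unit_vec j)"
    define w where "w = (\<lambda>k. unit_vec j k - z k)"
    have e: "supported S (unit_vec j)"
      using True unfolding supported_def unit_vec_def by auto
    have z: "z \<in> eigenspace S A \<theta>"
      unfolding z_def by (rule proj_vec_in_eigenspace[OF e])
    have "supported S w"
      using e eigenspace_supported[OF z] unfolding w_def supported_def by auto
    moreover have "ip x w = 0" if "x \<in> eigenspace S A \<theta>" for x
      using inner_eigenvector_proj_vec[OF that] unfolding z_def w_def inner_S_def
      by (simp add: algebra_simps sum_subtractf)
    ultimately have "mat_vec S P w i = 0"
      using P True unfolding is_eig_projector_def by blast
    moreover have "mat_vec S P z i = z i"
      using P True z unfolding is_eig_projector_def by blast
    moreover have "mat_vec S P (unit_vec j) i = mat_vec S P z i + mat_vec S P w i"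
      using mat_vec_lincomb[of S P 1 z 1 w i] unfolding w_def by simp
    moreover have "mat_vec S P (unit_vec j) i = P i j"
      unfolding mat_vec_def using sum_mult_unit_vec[OF finite_S] True by blast
    ultimately show ?thesis
      using True unfolding proj_mat_def z_def by simp
  qed
qed

lemma eig_proj_eq_proj_mat: "eig_proj S A \<theta> = proj_mat \<theta>"
proof -
  have "eig_proj S A \<theta> = (THE P. is_eig_projector \<theta> P)"
    unfolding eig_proj_def is_eig_projector_def ..
  also have "\<dots> = proj_mat \<theta>"
    using is_eig_projector_proj_mat is_eig_projector_unique by blast
  finally show ?thesis .
qed

lemma mat_vec_eig_proj: "mat_vec S (eig_proj S A \<theta>) y = proj_vec \<theta> y"
  by (simp add: eig_proj_eq_proj_mat mat_vec_proj_mat fun_eq_iff)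

lemma eig_proj_in_eigenspace:
  "supported S y \<Longrightarrow> mat_vec S (eig_proj S A \<theta>) y \<in> eigenspace S A \<theta>"
  unfolding mat_vec_eig_proj by (rule proj_vec_in_eigenspace)

lemma eig_proj_outside_spectrum: "\<theta> \<notin> spectrum S A \<Longrightarrow> eig_proj S A \<theta> = (\<lambda>i j. 0)"
  unfolding eig_proj_eq_proj_mat proj_mat_def proj_vec_def by (simp add: fun_eq_iff)

theorem sum_eig_proj:
  assumes "supported S y" "i \<in> S"
  shows "y i = (\<Sum>\<theta>\<in>spectrum S A. mat_vec S (eig_proj S A \<theta>) y i)"
proof -
  define r where "r = (\<lambda>k. y k - (\<Sum>\<theta>\<in>spectrum S A. proj_vec \<theta> y k))"
  have "ip u r = 0" if "u \<in> eigenspace S A \<mu>" for u \<mu>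
  proof -
    have "ip u r = ip u y - ip u (\<lambda>k. \<Sum>\<theta>\<in>spectrum S A. proj_vec \<theta> y k)"
      unfolding r_def inner_S_def by (simp add: right_diff_distrib sum_subtractf)
    also have "ip u (\<lambda>k. \<Sum>\<theta>\<in>spectrum S A. proj_vec \<theta> y k) = (\<Sum>\<theta>\<in>spectrum S A. ip u (proj_vec \<theta> y))"
      by (rule inner_S_sum_right)
    also have "\<dots> = (if \<mu> \<in> spectrum S A then ip u y else 0)"
      unfolding inner_eigenvector_proj_vec[OF that] using finite_spectrum by (simp add: sum.delta)
    also have "ip u y - (if \<mu> \<in> spectrum S A then ip u y else 0) = 0"
      using eigenvector_outside_spectrum[OF _ that] unfolding inner_S_def by simp
    finally show ?thesis .
  qed
  moreover have "supported S r"
    using assms(1) unfolding r_def supported_def proj_vec_def by simp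
  ultimately have "r i = 0"
    using eig_perp_eq_0[OF _ assms(2)] unfolding eig_perp_def by blast
  then show ?thesis
    unfolding r_def mat_vec_eig_proj by simp
qed

end


section \<open>Matrix exponential and graph Laplacian\<close>

lemma mat_vec_mat_mult:
  fixes M P :: "'v \<Rightarrow> 'v \<Rightarrow> 'a::comm_semiring_0"
  shows "mat_vec S (mat_mult S M P) z i = mat_vec S M (mat_vec S P z) i"
proof -
  have "mat_vec S (mat_mult S M P) z i = (\<Sum>j\<in>S. \<Sum>l\<in>S. M i l * P l j * z j)"
    unfolding mat_vec_def mat_mult_def by (simp add: sum_distrib_right)
  also have "\<dots> = (\<Sum>l\<in>S. \<Sum>j\<in>S. M i l * P l j * z j)"
    by (rule sum.swap)
  also have "\<dots> = mat_vec S M (mat_vec S P z) i"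
    unfolding mat_vec_def by (simp add: sum_distrib_left mult.assoc)
  finally show ?thesis .
qed

lemma mat_pow_eigenvector:
  fixes M :: "'v \<Rightarrow> 'v \<Rightarrow> 'a::comm_ring_1"
  assumes "finite S" and eig: "\<And>i. i \<in> S \<Longrightarrow> mat_vec S M z i = \<mu> * z i" and "i \<in> S"
  shows "mat_vec S (mat_pow S M k) z i = \<mu> ^ k * z i"
  using \<open>i \<in> S\<close>
proof (induction k arbitrary: i)
  case 0
  have "mat_vec S (mat_id S) z i = (\<Sum>j\<in>S. if j = i then z j else 0)"
    unfolding mat_vec_def mat_id_def by (rule sum.cong) auto
  then show ?case
    using 0 assms(1) by simp
next
  case (Suc k)
  have "mat_vec S (mat_pow S M (Suc k)) z i = mat_vec S M (mat_vec S (mat_pow S M k) z) i"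
    by (simp add: mat_vec_mat_mult)
  also have "\<dots> = mat_vec S M (\<lambda>l. \<mu> ^ k * z l) i"
    using Suc.IH unfolding mat_vec_def[of S M] by (intro sum.cong) auto
  also have "\<dots> = \<mu> ^ Suc k * z i"
    using eig[OF Suc.prems] by (simp add: mat_vec_scale)
  finally show ?case .
qed

lemma norm_mat_pow_le:
  fixes M :: "'v \<Rightarrow> 'v \<Rightarrow> complex"
  assumes B: "\<And>i j. i \<in> S \<Longrightarrow> j \<in> S \<Longrightarrow> norm (M i j) \<le> B" and "B \<ge> 0" and "i \<in> S"
  shows "norm (mat_pow S M k i j) \<le> (real (card S) * B) ^ k"
  using \<open>i \<in> S\<close>
proof (induction k arbitrary: i j)
  case 0
  then show ?case
    by (simp add: mat_id_def)
next
  case (Suc k)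
  have "norm (mat_pow S M (Suc k) i j) \<le> (\<Sum>l\<in>S. norm (M i l) * norm (mat_pow S M k l j))"
    unfolding mat_pow.simps mat_mult_def by (rule order.trans[OF norm_sum]) (simp add: norm_mult)
  also have "\<dots> \<le> (\<Sum>l\<in>S. B * (real (card S) * B) ^ k)"
    using Suc B \<open>B \<ge> 0\<close> by (intro sum_mono mult_mono) auto
  also have "\<dots> = (real (card S) * B) ^ Suc k"
    by simp
  finally show ?case .
qed

lemma summable_mat_exp_entry:
  fixes M :: "'v \<Rightarrow> 'v \<Rightarrow> complex"
  assumes "finite S" "i \<in> S"
  shows "summable (\<lambda>k. mat_pow S M k i j / of_nat (fact k))"
proof -
  define B where "B = (\<Sum>p\<in>S. \<Sum>q\<in>S. norm (M p q))"
  have B: "norm (M p q) \<le> B" if "p \<in> S" "q \<in> S" for p q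
  proof -
    have "norm (M p q) \<le> (\<Sum>q\<in>S. norm (M p q))"
      by (rule member_le_sum[OF that(2) _ assms(1)]) auto
    also have "\<dots> \<le> B"
      unfolding B_def by (rule member_le_sum[OF that(1) _ assms(1)]) (auto intro: sum_nonneg)
    finally show ?thesis .
  qed
  have "B \<ge> 0"
    unfolding B_def by (intro sum_nonneg) auto
  define C where "C = real (card S) * B"
  have "norm (mat_pow S M k i j / of_nat (fact k)) \<le> C ^ k /\<^sub>R fact k" for k
  proof -
    have "norm (mat_pow S M k i j) \<le> C ^ k"
      using norm_mat_pow_le[where M=M and B=B and k=k and j=j, OF B \<open>B \<ge> 0\<close> assms(2)]
      unfolding C_def .
    then have "norm (mat_pow S M k i j) / fact k \<le> C ^ k / fact k"
      by (rule divide_right_mono) simp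
    moreover have "norm (mat_pow S M k i j / of_nat (fact k)) = norm (mat_pow S M k i j) / fact k"
      by (simp add: norm_divide)
    ultimately show ?thesis
      by (simp add: divide_inverse_commute)
  qed
  then show ?thesis
    by (rule summable_comparison_test'[OF summable_exp_generic])
qed

lemma mat_exp_eigenvector:
  fixes M :: "'v \<Rightarrow> 'v \<Rightarrow> complex"
  assumes "finite S" and eig: "\<And>i. i \<in> S \<Longrightarrow> mat_vec S M z i = \<mu> * z i" and "i \<in> S"
  shows "mat_vec S (mat_exp S M) z i = exp \<mu> * z i"
proof -
  have "mat_vec S (mat_exp S M) z i = (\<Sum>j\<in>S. \<Sum>k. mat_pow S M k i j / of_nat (fact k) * z j)"
    unfolding mat_vec_def mat_exp_def
    by (intro sum.cong refl suminf_mult2 summable_mat_exp_entry assms(1,3))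
  also have "\<dots> = (\<Sum>k. \<Sum>j\<in>S. mat_pow S M k i j / of_nat (fact k) * z j)"
    by (rule suminf_sum[symmetric]) (intro summable_mult2 summable_mat_exp_entry assms(1,3))
  also have "\<dots> = (\<Sum>k. \<mu> ^ k /\<^sub>R fact k * z i)"
  proof (rule suminf_cong)
    fix k
    have "(\<Sum>j\<in>S. mat_pow S M k i j / of_nat (fact k) * z j) = mat_vec S (mat_pow S M k) z i / of_nat (fact k)"
      unfolding mat_vec_def by (simp add: sum_divide_distrib)
    then show "(\<Sum>j\<in>S. mat_pow S M k i j / of_nat (fact k) * z j) = \<mu> ^ k /\<^sub>R fact k * z i"
      using mat_pow_eigenvector[OF assms] by (simp add: scaleR_conv_of_real divide_inverse mult_ac)
  qed
  also have "\<dots> = exp \<mu> * z i"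
    by (rule sums_unique[symmetric]) (intro sums_mult2 exp_converges)
  finally show ?thesis .
qed

lemma mat_exp_real_eigenvector:
  fixes L :: "'v \<Rightarrow> 'v \<Rightarrow> real" and c :: complex
  assumes "finite S" and eig: "\<And>i. i \<in> S \<Longrightarrow> mat_vec S L z i = \<mu> * z i" and "i \<in> S"
  shows "mat_vec S (mat_exp S (\<lambda>i j. c * of_real (L i j))) (\<lambda>j. of_real (z j)) i
           = exp (c * of_real \<mu>) * of_real (z i)"
proof (rule mat_exp_eigenvector[OF assms(1) _ assms(3)])
  fix i assume "i \<in> S"
  have "mat_vec S (\<lambda>i j. c * of_real (L i j)) (\<lambda>j. of_real (z j)) i = c * of_real (mat_vec S L z i)"
    unfolding mat_vec_def by (simp add: sum_distrib_left mult.assoc)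
  then show "mat_vec S (\<lambda>i j. c * of_real (L i j)) (\<lambda>j. of_real (z j)) i
      = c * of_real \<mu> * of_real (z i)"
    using eig[OF \<open>i \<in> S\<close>] by simp
qed

lemma mat_vec_laplacian:
  assumes "simple_graph V adj" "i \<in> V"
  shows "mat_vec V (laplacian V adj) z i = (\<Sum>j\<in>neighbours V adj i. z i - z j)"
proof -
  have fin: "finite V" and irr: "\<not> adj i i"
    using assms(1) unfolding simple_graph_def by auto
  have "mat_vec V (laplacian V adj) z i
      = (\<Sum>j\<in>V. (if j = i then real (Defs.degree V adj i) * z j else 0) - (if adj i j then z j else 0))"
    unfolding mat_vec_def laplacian_def using assms(2) irr by (intro sum.cong) auto
  also have "\<dots> = real (Defs.degree V adj i) * z i - (\<Sum>j\<in>neighbours V adj i. z j)"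
    using assms(2) fin unfolding neighbours_def by (simp add: sum_subtractf sum.inter_filter)
  also have "\<dots> = (\<Sum>j\<in>neighbours V adj i. z i - z j)"
    unfolding Defs.degree_def by (simp add: sum_subtractf)
  finally show ?thesis .
qed

lemma sym_matrix_laplacian:
  assumes "simple_graph V adj"
  shows "sym_matrix V (laplacian V adj)"
proof
  show "finite V"
    using assms unfolding simple_graph_def by simp
  show "laplacian V adj i j = laplacian V adj j i" for i j
    using assms unfolding simple_graph_def laplacian_def by auto
  show "laplacian V adj i j \<noteq> 0 \<Longrightarrow> i \<in> V \<and> j \<in> V" for i j
    unfolding laplacian_def by (auto split: if_splits)
qed

lemma laplacian_eigenvector_neighbours:
  assumes "simple_graph V adj" "u \<in> eigenspace V (laplacian V adj) \<theta>" "v \<in> V"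
  shows "(\<Sum>w\<in>neighbours V adj v. u v - u w) = \<theta> * u v"
  using assms(2,3) mat_vec_laplacian[OF assms(1,3)] unfolding eigenspace_def by auto


section \<open>The Q-graph\<close>

text \<open>\<open>lift_vertices u\<close> and \<open>lift_edges u\<close> are the vectors u_V and u_E of the proof idea;
  \<open>lift_edges u\<close> is the image of \<open>u\<close> under the transposed vertex-edge incidence matrix.\<close>

definition lift_vertices :: "('v \<Rightarrow> real) \<Rightarrow> 'v + 'v set \<Rightarrow> real" where
  "lift_vertices u k = (case k of Inl v \<Rightarrow> u v | Inr e \<Rightarrow> 0)"

definition lift_edges :: "('v \<Rightarrow> real) \<Rightarrow> 'v + 'v set \<Rightarrow> real" where
  "lift_edges u k = (case k of Inl v \<Rightarrow> 0 | Inr e \<Rightarrow> sum u e)"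

lemma lift_vertices_simps [simp]: "lift_vertices u (Inl v) = u v" "lift_vertices u (Inr e) = 0"
  unfolding lift_vertices_def by simp_all

lemma lift_edges_simps [simp]: "lift_edges u (Inl v) = 0" "lift_edges u (Inr e) = sum u e"
  unfolding lift_edges_def by simp_all

locale regular_graph =
  fixes V :: "'v set" and adj :: "'v \<Rightarrow> 'v \<Rightarrow> bool" and r :: nat
  assumes simple: "simple_graph V adj" and regular: "regular V adj r"
begin

abbreviation "N \<equiv> neighbours V adj"
abbreviation "E \<equiv> edges V adj"
abbreviation "QV \<equiv> Q_vertices V adj"
abbreviation "NQ \<equiv> neighbours QV (Q_adj V adj)"
abbreviation "LQ \<equiv> laplacian QV (Q_adj V adj)"

lemma finite_V: "finite V"
  using simple unfolding simple_graph_def by auto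

lemma adj_in_V: "adj u w \<Longrightarrow> u \<in> V \<and> w \<in> V"
  using simple unfolding simple_graph_def by auto

lemma adj_sym: "adj u w \<Longrightarrow> adj w u"
  using simple unfolding simple_graph_def by auto

lemma adj_irrefl: "\<not> adj u u"
  using simple unfolding simple_graph_def by auto

lemma in_neighbours_iff: "w \<in> N v \<longleftrightarrow> adj v w"
  unfolding neighbours_def using adj_in_V by auto

lemma finite_neighbours: "finite (N v)"
  unfolding neighbours_def using finite_V by auto

lemma card_neighbours: "v \<in> V \<Longrightarrow> card (N v) = r"
  using regular unfolding regular_def Defs.degree_def by auto

lemma finite_edges: "finite E"
proof -
  have "E \<subseteq> (\<lambda>(u, w). {u, w}) ` (V \<times> V)"
    unfolding edges_def using adj_in_V by auto
  then show ?thesis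
    using finite_V by (meson finite_SigmaI finite_imageI finite_subset)
qed

lemma edge_subset_V: "e \<in> E \<Longrightarrow> e \<subseteq> V"
  unfolding edges_def using adj_in_V by auto

lemma edge_containing: "e \<in> E \<Longrightarrow> v \<in> e \<Longrightarrow> \<exists>w. adj v w \<and> e = {v, w}"
  unfolding edges_def using adj_sym by (auto simp: insert_commute)

lemma edge_sum: "adj p w \<Longrightarrow> sum u {p, w} = u p + u w"
  using adj_irrefl by (cases "p = w") auto

lemma Q_vertices_cases:
  assumes "k \<in> QV"
  obtains v where "k = Inl v" "v \<in> V" | p q where "k = Inr {p, q}" "adj p q"
  using assms unfolding Q_vertices_def edges_def by auto

lemma simple_graph_Q: "simple_graph QV (Q_adj V adj)"
  unfolding simple_graph_def
proof (intro conjI allI impI)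
  show "finite QV"
    unfolding Q_vertices_def using finite_V finite_edges by simp
  fix u w
  show "Q_adj V adj u w \<Longrightarrow> u \<in> QV" "Q_adj V adj u w \<Longrightarrow> w \<in> QV"
    using edge_subset_V unfolding Q_vertices_def by (cases u; cases w; auto)+
  show "Q_adj V adj u w \<Longrightarrow> Q_adj V adj w u"
    by (cases u; cases w) auto
next
  fix u
  show "\<not> Q_adj V adj u u"
    by (cases u) auto
qed

lemma finite_Q_vertices: "finite QV"
  using simple_graph_Q unfolding simple_graph_def by auto

lemma neighbours_Q_Inl:
  assumes "v \<in> V"
  shows "NQ (Inl v) = Inr ` (\<lambda>w. {v, w}) ` N v"
proof (intro set_eqI iffI)
  fix k assume "k \<in> NQ (Inl v)"
  then obtain e where e: "k = Inr e" "e \<in> E" "v \<in> e"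
    unfolding neighbours_def by (cases k) auto
  then obtain w where "adj v w" "e = {v, w}"
    using edge_containing by blast
  then show "k \<in> Inr ` (\<lambda>w. {v, w}) ` N v"
    using e(1) in_neighbours_iff by auto
next
  fix k :: "'v + 'v set" assume "k \<in> Inr ` (\<lambda>w. {v, w}) ` N v"
  then obtain w where w: "adj v w" "k = Inr {v, w}"
    using in_neighbours_iff by auto
  then have "{v, w} \<in> E"
    unfolding edges_def by auto
  then show "k \<in> NQ (Inl v)"
    using w unfolding neighbours_def Q_vertices_def by auto
qed

lemma neighbours_Q_Inr:
  assumes pq: "adj p q"
  shows "NQ (Inr {p, q}) = Inl ` {p, q}
           \<union> (Inr ` (\<lambda>w. {p, w}) ` (N p - {q}) \<union> Inr ` (\<lambda>w. {q, w}) ` (N q - {p}))"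
proof (intro set_eqI iffI)
  fix k assume k: "k \<in> NQ (Inr {p, q})"
  show "k \<in> Inl ` {p, q} \<union> (Inr ` (\<lambda>w. {p, w}) ` (N p - {q}) \<union> Inr ` (\<lambda>w. {q, w}) ` (N q - {p}))"
  proof (cases k)
    case (Inl u)
    then show ?thesis
      using k unfolding neighbours_def by auto
  next
    case (Inr f)
    then have f: "f \<in> E" "f \<noteq> {p, q}" "f \<inter> {p, q} \<noteq> {}"
      using k unfolding neighbours_def by auto
    show ?thesis
    proof (cases "p \<in> f")
      case True
      then obtain w where "adj p w" "f = {p, w}"
        using edge_containing f(1) by blast
      then show ?thesis
        using Inr f(2) in_neighbours_iff by auto
    next
      case False
      then have "q \<in> f"
        using f(3) by auto
      then obtain w where "adj q w" "f = {q, w}"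
        using edge_containing f(1) by blast
      then show ?thesis
        using Inr False in_neighbours_iff by auto
    qed
  qed
next
  have e: "{p, q} \<in> E"
    using pq unfolding edges_def by auto
  have "p \<in> V" "q \<in> V" "p \<noteq> q"
    using adj_in_V[OF pq] pq adj_irrefl by auto
  fix k :: "'v + 'v set"
  assume "k \<in> Inl ` {p, q} \<union> (Inr ` (\<lambda>w. {p, w}) ` (N p - {q}) \<union> Inr ` (\<lambda>w. {q, w}) ` (N q - {p}))"
  then consider "k = Inl p" | "k = Inl q"
    | w where "k = Inr {p, w}" "adj p w" "w \<noteq> q"
    | w where "k = Inr {q, w}" "adj q w" "w \<noteq> p"
    using in_neighbours_iff by auto
  then show "k \<in> NQ (Inr {p, q})"
  proof cases
    case (3 w)
    then have "{p, w} \<in> E" "{p, w} \<noteq> {p, q}"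
      unfolding edges_def by (auto simp: doubleton_eq_iff)
    then show ?thesis
      using 3 e unfolding neighbours_def Q_vertices_def by auto
  next
    case (4 w)
    then have "{q, w} \<in> E" "{q, w} \<noteq> {p, q}"
      using \<open>p \<noteq> q\<close> unfolding edges_def by (auto simp: doubleton_eq_iff)
    then show ?thesis
      using 4 e unfolding neighbours_def Q_vertices_def by auto
  qed (use e \<open>p \<in> V\<close> \<open>q \<in> V\<close> in \<open>auto simp: neighbours_def Q_vertices_def\<close>)
qed

lemma inj_on_edges_at: "inj_on (\<lambda>w. {v, w}) (N v)"
  by (rule inj_onI) (auto simp: doubleton_eq_iff in_neighbours_iff adj_irrefl)

lemma sum_neighbours_Q_Inl:
  assumes "v \<in> V"
  shows "(\<Sum>k\<in>NQ (Inl v). h k) = (\<Sum>w\<in>N v. h (Inr {v, w}))"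
  unfolding neighbours_Q_Inl[OF assms]
  by (simp add: sum.reindex inj_on_edges_at)

lemma sum_neighbours_Q_Inr:
  assumes pq: "adj p q"
  shows "(\<Sum>k\<in>NQ (Inr {p, q}). h k) = h (Inl p) + h (Inl q)
     + (\<Sum>w\<in>N p - {q}. h (Inr {p, w})) + (\<Sum>w\<in>N q - {p}. h (Inr {q, w}))"
proof -
  have "p \<noteq> q"
    using pq adj_irrefl by auto
  let ?B = "Inr ` (\<lambda>w. {p, w}) ` (N p - {q}) :: ('v + 'v set) set"
  let ?C = "Inr ` (\<lambda>w. {q, w}) ` (N q - {p}) :: ('v + 'v set) set"
  have "?B \<inter> ?C = {}"
    using \<open>p \<noteq> q\<close> by (auto simp: doubleton_eq_iff in_neighbours_iff)
  then have "(\<Sum>k\<in>NQ (Inr {p, q}). h k) = sum h (Inl ` {p, q}) + (sum h ?B + sum h ?C)"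
    unfolding neighbours_Q_Inr[OF pq] using finite_neighbours
    by (subst sum.union_disjoint) (auto simp: sum.union_disjoint)
  also have "sum h ?B = (\<Sum>w\<in>N p - {q}. h (Inr {p, w}))"
    using inj_on_subset[OF inj_on_edges_at[of p], of "N p - {q}"] by (simp add: sum.reindex)
  also have "sum h ?C = (\<Sum>w\<in>N q - {p}. h (Inr {q, w}))"
    using inj_on_subset[OF inj_on_edges_at[of q], of "N q - {p}"] by (simp add: sum.reindex)
  finally show ?thesis
    using \<open>p \<noteq> q\<close> by (simp add: add.assoc)
qed

lemma laplacian_Q_lift_vertices:
  assumes "k \<in> QV"
  shows "mat_vec QV LQ (lift_vertices u) k = real r * lift_vertices u k - lift_edges u k"
  using assms
proof (cases rule: Q_vertices_cases)
  case (1 v)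
  then show ?thesis
    unfolding mat_vec_laplacian[OF simple_graph_Q assms]
    by (simp add: sum_neighbours_Q_Inl card_neighbours)
next
  case (2 p q)
  then show ?thesis
    unfolding mat_vec_laplacian[OF simple_graph_Q assms]
    by (simp add: sum_neighbours_Q_Inr edge_sum)
qed

lemma laplacian_Q_lift_edges:
  assumes u: "u \<in> eigenspace V (laplacian V adj) \<theta>" and "k \<in> QV"
  shows "mat_vec QV LQ (lift_edges u) k
           = (\<theta> + 2) * lift_edges u k - (2 * real r - \<theta>) * lift_vertices u k"
proof -
  have sum_N: "(\<Sum>w\<in>N v. u w) = (real r - \<theta>) * u v" if "v \<in> V" for v
    using laplacian_eigenvector_neighbours[OF simple u that] card_neighbours[OF that]
    by (simp add: sum_subtractf algebra_simps)
  have sum_N_minus: "(\<Sum>w\<in>N p - {q}. u p + u q - sum u {p, w}) = real r * u q - (real r - \<theta>) * u p"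
    if "adj p q" for p q
  proof -
    have "(\<Sum>w\<in>N p - {q}. u p + u q - sum u {p, w}) = (\<Sum>w\<in>N p - {q}. u q - u w)"
      by (intro sum.cong) (simp_all add: edge_sum in_neighbours_iff)
    also have "\<dots> = (\<Sum>w\<in>N p. u q - u w)"
      using that in_neighbours_iff finite_neighbours by (simp add: sum_diff1)
    also have "\<dots> = real r * u q - (real r - \<theta>) * u p"
      using adj_in_V[OF that] card_neighbours sum_N by (simp add: sum_subtractf)
    finally show ?thesis .
  qed
  from \<open>k \<in> QV\<close> show ?thesis
  proof (cases rule: Q_vertices_cases)
    case (1 v)
    have "mat_vec QV LQ (lift_edges u) k = (\<Sum>w\<in>N v. - (u v + u w))"
      unfolding mat_vec_laplacian[OF simple_graph_Q \<open>k \<in> QV\<close>]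
      unfolding 1 sum_neighbours_Q_Inl[OF 1(2)]
      by (intro sum.cong) (simp_all add: edge_sum in_neighbours_iff)
    also have "\<dots> = - (real r * u v + (real r - \<theta>) * u v)"
      using card_neighbours[OF 1(2)] sum_N[OF 1(2)] by (simp add: sum_subtractf)
    finally show ?thesis
      using 1 by (simp add: algebra_simps)
  next
    case (2 p q)
    have "mat_vec QV LQ (lift_edges u) k = 2 * (u p + u q)
        + (\<Sum>w\<in>N p - {q}. u p + u q - sum u {p, w}) + (\<Sum>w\<in>N q - {p}. u q + u p - sum u {q, w})"
      unfolding mat_vec_laplacian[OF simple_graph_Q \<open>k \<in> QV\<close>]
      unfolding 2 sum_neighbours_Q_Inr[OF 2(2)]
      by (simp add: edge_sum[OF 2(2)] algebra_simps)
    also have "\<dots> = (\<theta> + 2) * (u p + u q)"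
      unfolding sum_N_minus[OF 2(2)] sum_N_minus[OF adj_sym[OF 2(2)]] by (simp add: algebra_simps)
    finally show ?thesis
      using 2 by (simp add: edge_sum[OF 2(2)])
  qed
qed

text \<open>The root condition is the characteristic polynomial of the matrix
  \<open>[[r, -(2r - \<theta>)], [-1, \<theta> + 2]]\<close> by which \<open>L_Q\<close> acts on the span of
  \<open>lift_vertices u\<close> and \<open>lift_edges u\<close>.\<close>

lemma laplacian_Q_eigenvector:
  assumes u: "u \<in> eigenspace V (laplacian V adj) \<theta>" and "k \<in> QV"
    and root: "\<mu>\<^sup>2 - (real r + 2 + \<theta>) * \<mu> + \<theta> * (real r + 1) = 0"
  shows "mat_vec QV LQ (\<lambda>j. (\<theta> + 2 - \<mu>) * lift_vertices u j + 1 * lift_edges u j) k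
           = \<mu> * ((\<theta> + 2 - \<mu>) * lift_vertices u k + 1 * lift_edges u k)"
proof -
  have "mat_vec QV LQ (\<lambda>j. (\<theta> + 2 - \<mu>) * lift_vertices u j + 1 * lift_edges u j) k
      = ((\<theta> + 2 - \<mu>) * real r - (2 * real r - \<theta>)) * lift_vertices u k + \<mu> * lift_edges u k"
    unfolding mat_vec_lincomb laplacian_Q_lift_vertices[OF \<open>k \<in> QV\<close>]
      laplacian_Q_lift_edges[OF u \<open>k \<in> QV\<close>]
    by (simp add: algebra_simps)
  also have "(\<theta> + 2 - \<mu>) * real r - (2 * real r - \<theta>) = \<mu> * (\<theta> + 2 - \<mu>)"
    using root by (simp add: power2_eq_square algebra_simps)
  finally show ?thesis
    by (simp add: algebra_simps)
qed

end


section \<open>Continuous-time quantum walk on the Q-graph\<close>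

lemma exp_i_times_real: "exp (\<i> * complex_of_real \<phi>) = of_real (cos \<phi>) + \<i> * of_real (sin \<phi>)"
  by (simp add: cis_conv_exp[symmetric] cis.code Complex_eq)

lemma Delta_Q_radicand_pos: "(real r + 2 - \<theta>)\<^sup>2 + 4 * \<theta> > 0"
proof -
  have "(real r + 2 - \<theta>)\<^sup>2 + 4 * \<theta> = (\<theta> - real r)\<^sup>2 + 4 * real r + 4"
    by (simp add: power2_eq_square algebra_simps)
  also have "\<dots> > 0"
    by (simp add: add_nonneg_pos)
  finally show ?thesis .
qed

lemma Delta_Q_pos: "Delta_Q r \<theta> > 0"
  unfolding Delta_Q_def using Delta_Q_radicand_pos by simp

lemma Delta_Q_squared: "(Delta_Q r \<theta>)\<^sup>2 = (real r + 2 - \<theta>)\<^sup>2 + 4 * \<theta>"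
  unfolding Delta_Q_def using Delta_Q_radicand_pos[of r \<theta>] by simp

lemma Delta_Q_root:
  assumes "\<mu> = (real r + 2 + \<theta> + Delta_Q r \<theta>) / 2 \<or> \<mu> = (real r + 2 + \<theta> - Delta_Q r \<theta>) / 2"
  shows "\<mu>\<^sup>2 - (real r + 2 + \<theta>) * \<mu> + \<theta> * (real r + 1) = 0"
proof -
  have "2 * \<mu> - (real r + 2 + \<theta>) = Delta_Q r \<theta> \<or> 2 * \<mu> - (real r + 2 + \<theta>) = - Delta_Q r \<theta>"
    using assms by auto
  then have "(2 * \<mu> - (real r + 2 + \<theta>))\<^sup>2 = (Delta_Q r \<theta>)\<^sup>2"
    by auto
  then show ?thesis
    unfolding Delta_Q_squared by (simp add: power2_eq_square algebra_simps)
qed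

definition Q_amplitude :: "nat \<Rightarrow> real \<Rightarrow> real \<Rightarrow> complex" where
  "Q_amplitude r \<theta> t = exp (- \<i> * of_real t * (of_nat r + 2) / 2) * exp (- \<i> * of_real t * of_real \<theta> / 2)
     * (of_real (cos (Delta_Q r \<theta> * t / 2))
        + \<i> * of_real ((\<theta> + 2 - real r) / Delta_Q r \<theta>) * of_real (sin (Delta_Q r \<theta> * t / 2)))"

lemma Q_amplitude_eq_exp_combination:
  fixes r :: nat and \<theta> t :: real
  defines "D \<equiv> Delta_Q r \<theta>"
  defines "lp \<equiv> (real r + 2 + \<theta> + D) / 2" and "lm \<equiv> (real r + 2 + \<theta> - D) / 2"
  shows "of_real ((\<theta> + 2 - lm) / D) * exp (- \<i> * of_real t * of_real lm)
           - of_real ((\<theta> + 2 - lp) / D) * exp (- \<i> * of_real t * of_real lp) = Q_amplitude r \<theta> t"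
proof -
  have "D > 0"
    unfolding D_def by (rule Delta_Q_pos)
  define X where "X = exp (- \<i> * of_real t * (of_nat r + 2) / 2) * exp (- \<i> * of_real t * of_real \<theta> / 2)"
  define \<phi> where "\<phi> = D * t / 2"
  define \<kappa> where "\<kappa> = (\<theta> + 2 - real r) / D"
  have exp_lm: "exp (- \<i> * of_real t * of_real lm) = X * exp (\<i> * of_real \<phi>)"
  proof -
    have "- \<i> * of_real t * of_real lm
        = - \<i> * of_real t * (of_nat r + 2) / 2 + - \<i> * of_real t * of_real \<theta> / 2 + \<i> * of_real \<phi>"
      unfolding lm_def \<phi>_def by (simp add: field_simps)
    then show ?thesis
      unfolding X_def by (simp only: exp_add)
  qed
  have exp_lp: "exp (- \<i> * of_real t * of_real lp) = X * exp (- (\<i> * of_real \<phi>))"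
  proof -
    have "- \<i> * of_real t * of_real lp
        = - \<i> * of_real t * (of_nat r + 2) / 2 + - \<i> * of_real t * of_real \<theta> / 2 + - (\<i> * of_real \<phi>)"
      unfolding lp_def \<phi>_def by (simp add: field_simps)
    then show ?thesis
      unfolding X_def by (simp only: exp_add)
  qed
  have coeff_lm: "(\<theta> + 2 - lm) / D = 1/2 + \<kappa> / 2" and coeff_lp: "(\<theta> + 2 - lp) / D = - 1/2 + \<kappa> / 2"
    using \<open>D > 0\<close> unfolding lm_def lp_def \<kappa>_def by (simp_all add: field_simps)
  have exp_neg: "exp (- (\<i> * complex_of_real \<phi>)) = of_real (cos \<phi>) - \<i> * of_real (sin \<phi>)"
    using exp_i_times_real[of "- \<phi>"] by simp
  have "of_real ((\<theta> + 2 - lm) / D) * exp (- \<i> * of_real t * of_real lm)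
      - of_real ((\<theta> + 2 - lp) / D) * exp (- \<i> * of_real t * of_real lp)
      = X * (of_real (cos \<phi>) + \<i> * of_real \<kappa> * of_real (sin \<phi>))"
    unfolding exp_lm exp_lp coeff_lm coeff_lp exp_neg exp_i_times_real by (simp add: algebra_simps)
  also have "\<dots> = Q_amplitude r \<theta> t"
    unfolding Q_amplitude_def X_def \<phi>_def \<kappa>_def D_def by (simp add: mult_ac)
  finally show ?thesis .
qed

lemma Q_amplitude_2r: "Q_amplitude r (2 * real r) t = exp (- \<i> * of_nat r * of_real t)"
proof -
  have "Delta_Q r (2 * real r) = real r + 2"
  proof -
    have "(real r + 2 - 2 * real r)\<^sup>2 + 4 * (2 * real r) = (real r + 2)\<^sup>2"
      by (simp add: power2_eq_square algebra_simps)
    then show ?thesis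
      unfolding Delta_Q_def by simp
  qed
  then have "Q_amplitude r (2 * real r) t = exp (- \<i> * of_real t * (of_nat r + 2) / 2)
      * exp (- \<i> * of_real t * of_real (2 * real r) / 2) * exp (\<i> * of_real ((real r + 2) * t / 2))"
    unfolding Q_amplitude_def exp_i_times_real by simp
  also have "\<dots> = exp (- \<i> * of_real t * (of_nat r + 2) / 2 + - \<i> * of_real t * of_real (2 * real r) / 2
      + \<i> * of_real ((real r + 2) * t / 2))"
    by (simp only: exp_add)
  also have "- \<i> * of_real t * (of_nat r + 2) / 2 + - \<i> * of_real t * of_real (2 * real r) / 2
      + \<i> * of_real ((real r + 2) * t / 2) = - \<i> * of_nat r * of_real t"
    by (simp add: field_simps)
  finally show ?thesis .
qed

lemma lap_proj_in_eigenspace: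
  assumes "simple_graph V adj" "supported V y"
  shows "mat_vec V (lap_proj V adj \<theta>) y \<in> eigenspace V (laplacian V adj) \<theta>"
proof -
  interpret sym_matrix V "laplacian V adj"
    by (rule sym_matrix_laplacian[OF assms(1)])
  show ?thesis
    unfolding lap_proj_def by (rule eig_proj_in_eigenspace[OF assms(2)])
qed

lemma sum_lap_proj:
  assumes "simple_graph V adj" "supported V y"
  shows "y v = (\<Sum>\<theta>\<in>lap_spectrum V adj. mat_vec V (lap_proj V adj \<theta>) y v)"
proof -
  interpret sym_matrix V "laplacian V adj"
    by (rule sym_matrix_laplacian[OF assms(1)])
  show ?thesis
  proof (cases "v \<in> V")
    case True
    then show ?thesis
      unfolding lap_proj_def lap_spectrum_def by (rule sum_eig_proj[OF assms(2)])
  next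
    case False
    then show ?thesis
      using assms(2) eigenspace_supported[OF lap_proj_in_eigenspace[OF assms]]
      unfolding supported_def by simp
  qed
qed

context regular_graph
begin

lemma exp_laplacian_Q_lift_vertices:
  assumes u: "u \<in> eigenspace V (laplacian V adj) \<theta>" and "v \<in> V"
  shows "mat_vec QV (mat_exp QV (\<lambda>i j. - \<i> * of_real t * of_real (LQ i j)))
           (\<lambda>j. of_real (lift_vertices u j)) (Inl v) = Q_amplitude r \<theta> t * of_real (u v)"
proof -
  define D where "D = Delta_Q r \<theta>"
  define lp where "lp = (real r + 2 + \<theta> + D) / 2"
  define lm where "lm = (real r + 2 + \<theta> - D) / 2"
  define w where "w \<mu> j = (\<theta> + 2 - \<mu>) * lift_vertices u j + 1 * lift_edges u j" for \<mu> j
  let ?U = "mat_exp QV (\<lambda>i j. - \<i> * of_real t * of_real (LQ i j))"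
  have "Inl v \<in> QV"
    using \<open>v \<in> V\<close> unfolding Q_vertices_def by simp
  have evolve: "mat_vec QV ?U (\<lambda>j. of_real (w \<mu> j)) (Inl v)
      = exp (- \<i> * of_real t * of_real \<mu>) * of_real ((\<theta> + 2 - \<mu>) * u v)"
    if \<mu>: "\<mu> = lp \<or> \<mu> = lm" for \<mu>
  proof -
    have root: "\<mu> = (real r + 2 + \<theta> + Delta_Q r \<theta>) / 2 \<or> \<mu> = (real r + 2 + \<theta> - Delta_Q r \<theta>) / 2"
      using \<mu> unfolding lp_def lm_def D_def .
    have "mat_vec QV LQ (w \<mu>) k = \<mu> * w \<mu> k" if "k \<in> QV" for k
      unfolding w_def by (rule laplacian_Q_eigenvector[OF u that Delta_Q_root[OF root]])
    then have "mat_vec QV ?U (\<lambda>j. of_real (w \<mu> j)) (Inl v)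
        = exp (- \<i> * of_real t * of_real \<mu>) * of_real (w \<mu> (Inl v))"
      by (rule mat_exp_real_eigenvector[OF finite_Q_vertices _ \<open>Inl v \<in> QV\<close>])
    then show ?thesis
      unfolding w_def by simp
  qed
  have "D > 0"
    unfolding D_def by (rule Delta_Q_pos)
  have split: "(\<lambda>j. complex_of_real (lift_vertices u j))
      = (\<lambda>j. of_real (1 / D) * of_real (w lm j) + of_real (- 1 / D) * of_real (w lp j))"
  proof
    fix j
    have "lift_vertices u j = (w lm j - w lp j) / D"
      using \<open>D > 0\<close> unfolding w_def lp_def lm_def by (simp add: field_simps)
    then show "complex_of_real (lift_vertices u j)
        = of_real (1 / D) * of_real (w lm j) + of_real (- 1 / D) * of_real (w lp j)"
      by (simp add: diff_divide_distrib flip: of_real_mult of_real_add)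
  qed
  have "mat_vec QV ?U (\<lambda>j. of_real (lift_vertices u j)) (Inl v)
      = of_real (1 / D) * mat_vec QV ?U (\<lambda>j. of_real (w lm j)) (Inl v)
        + of_real (- 1 / D) * mat_vec QV ?U (\<lambda>j. of_real (w lp j)) (Inl v)"
    unfolding split by (rule mat_vec_lincomb)
  also have "\<dots> = (of_real ((\<theta> + 2 - lm) / D) * exp (- \<i> * of_real t * of_real lm)
         - of_real ((\<theta> + 2 - lp) / D) * exp (- \<i> * of_real t * of_real lp)) * of_real (u v)"
    unfolding evolve[OF disjI2[OF refl]] evolve[OF disjI1[OF refl]]
    using \<open>D > 0\<close> by (simp add: field_simps)
  also have "\<dots> = Q_amplitude r \<theta> t * of_real (u v)"
    unfolding D_def lp_def lm_def Q_amplitude_eq_exp_combination ..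
  finally show ?thesis .
qed

lemma exp_laplacian_Q_lift_vertices_spectral:
  assumes "supported V y" "v \<in> V"
  shows "mat_vec QV (mat_exp QV (\<lambda>i j. - \<i> * of_real t * of_real (LQ i j)))
           (\<lambda>k. of_real (lift_vertices y k)) (Inl v)
       = (\<Sum>\<theta>\<in>lap_spectrum V adj. Q_amplitude r \<theta> t * of_real (mat_vec V (lap_proj V adj \<theta>) y v))"
proof -
  have lift: "(\<lambda>k. complex_of_real (lift_vertices y k))
      = (\<lambda>k. \<Sum>\<theta>\<in>lap_spectrum V adj. of_real (lift_vertices (mat_vec V (lap_proj V adj \<theta>) y) k))"
  proof
    fix k :: "'v + 'v set"
    show "complex_of_real (lift_vertices y k)
        = (\<Sum>\<theta>\<in>lap_spectrum V adj. of_real (lift_vertices (mat_vec V (lap_proj V adj \<theta>) y) k))"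
    proof (cases k)
      case (Inl w)
      then show ?thesis
        using sum_lap_proj[OF simple assms(1), of w] by (simp flip: of_real_sum)
    qed simp
  qed
  show ?thesis
    unfolding lift mat_vec_sum
      exp_laplacian_Q_lift_vertices[OF lap_proj_in_eigenspace[OF simple assms(1)] assms(2)] ..
qed

lemma bilin_exp_laplacian_Q:
  assumes "a \<in> V" "b \<in> V" "c \<in> V" "d \<in> V"
  shows "bilin QV (\<lambda>k. unit_vec (Inl a) k - unit_vec (Inl b) k)
           (mat_exp QV (\<lambda>i j. - \<i> * of_real t * of_real (LQ i j)))
           (\<lambda>k. unit_vec (Inl c) k - unit_vec (Inl d) k)
       = (\<Sum>\<theta>\<in>lap_spectrum V adj. Q_amplitude r \<theta> t
           * of_real (bilin V (\<lambda>v. unit_vec a v - unit_vec b v) (lap_proj V adj \<theta>)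
                        (\<lambda>v. unit_vec c v - unit_vec d v)))"
proof -
  define y :: "'v \<Rightarrow> real" where "y v = unit_vec c v - unit_vec d v" for v
  define P where "P \<theta> = mat_vec V (lap_proj V adj \<theta>) y" for \<theta>
  have "supported V y"
    using assms(3,4) unfolding y_def supported_def unit_vec_def by auto
  have y_Q: "(\<lambda>k. unit_vec (Inl c) k - unit_vec (Inl d) k) = (\<lambda>k. complex_of_real (lift_vertices y k))"
    by (auto simp: fun_eq_iff y_def unit_vec_def lift_vertices_def split: sum.split)
  have ab: "Inl a \<in> QV" "Inl b \<in> QV"
    using assms(1,2) unfolding Q_vertices_def by auto
  have "bilin QV (\<lambda>k. unit_vec (Inl a) k - unit_vec (Inl b) k)
      (mat_exp QV (\<lambda>i j. - \<i> * of_real t * of_real (LQ i j))) (\<lambda>k. unit_vec (Inl c) k - unit_vec (Inl d) k)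
      = (\<Sum>\<theta>\<in>lap_spectrum V adj. Q_amplitude r \<theta> t * of_real (P \<theta> a - P \<theta> b))"
    unfolding y_Q bilin_conv_mat_vec sum_unit_vec_diff_mult[OF finite_Q_vertices ab]
      exp_laplacian_Q_lift_vertices_spectral[OF \<open>supported V y\<close> assms(1)]
      exp_laplacian_Q_lift_vertices_spectral[OF \<open>supported V y\<close> assms(2)] P_def
    by (simp add: sum_subtractf right_diff_distrib)
  moreover have "bilin V (\<lambda>v. unit_vec a v - unit_vec b v) (lap_proj V adj \<theta>)
      (\<lambda>v. unit_vec c v - unit_vec d v) = P \<theta> a - P \<theta> b" for \<theta>
    unfolding bilin_conv_mat_vec P_def y_def[symmetric]
    by (rule sum_unit_vec_diff_mult[OF finite_V assms(1,2)])
  ultimately show ?thesis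
    by simp
qed

end

theorem lemma4p1:
  fixes V :: "'v set" and adj :: "'v \<Rightarrow> 'v \<Rightarrow> bool" and r :: nat and a b c d :: 'v
  assumes "simple_graph V adj" and "connected_graph V adj" and "regular V adj r"
    and "r \<ge> 2"
    and "a \<in> V" "b \<in> V" "c \<in> V" "d \<in> V"
  defines "lhs \<equiv> \<lambda>t::real. (1/2) * bilin (Q_vertices V adj)
            (\<lambda>v. unit_vec (Inl a) v - unit_vec (Inl b) v)
            (mat_exp (Q_vertices V adj) (\<lambda>i j. - \<i> * of_real t * of_real (laplacian (Q_vertices V adj) (Q_adj V adj) i j)))
            (\<lambda>v. unit_vec (Inl c) v - unit_vec (Inl d) v)"
    and "term \<equiv> \<lambda>(t::real) (\<theta>::real).
            exp (- \<i> * of_real t * of_real \<theta> / 2)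
          * of_real (bilin V (\<lambda>v. unit_vec a v - unit_vec b v) (lap_proj V adj \<theta>)
                          (\<lambda>v. unit_vec c v - unit_vec d v))
          * (of_real (cos (Delta_Q r \<theta> * t / 2))
             + \<i> * of_real ((\<theta> + 2 - real r) / Delta_Q r \<theta>) * of_real (sin (Delta_Q r \<theta> * t / 2)))"
  shows "(\<not> bipartite V adj \<longrightarrow> (\<forall>t::real.
            lhs t = (1/2) * exp (- \<i> * of_real t * (of_nat r + 2) / 2)
                      * (\<Sum>\<theta> \<in> lap_spectrum V adj. term t \<theta>)))
       \<and> (bipartite V adj \<longrightarrow> (\<forall>t::real.
            lhs t = (1/2) * exp (- \<i> * of_real t * (of_nat r + 2) / 2)
                      * (\<Sum>\<theta> \<in> lap_spectrum V adj - {2 * real r}. term t \<theta>)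
                    + (1/2) * exp (- \<i> * of_nat r * of_real t)
                      * of_real (bilin V (\<lambda>v. unit_vec a v - unit_vec b v)
                                   (lap_proj V adj (2 * real r))
                                   (\<lambda>v. unit_vec c v - unit_vec d v))))"
proof -
  interpret regular_graph V adj r
    using assms(1,3) by unfold_locales
  interpret L: sym_matrix V "laplacian V adj"
    by (rule sym_matrix_laplacian[OF assms(1)])
  define B where "B \<theta> = bilin V (\<lambda>v. unit_vec a v - unit_vec b v) (lap_proj V adj \<theta>)
    (\<lambda>v. unit_vec c v - unit_vec d v)" for \<theta>
  define F where "F t \<theta> = Q_amplitude r \<theta> t * of_real (B \<theta>)" for t \<theta>
  have lhs: "lhs t = 1/2 * (\<Sum>\<theta>\<in>lap_spectrum V adj. F t \<theta>)" for t
    unfolding lhs_def F_def B_def using bilin_exp_laplacian_Q[OF assms(5-8)] by simp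
  have terms: "1/2 * exp (- \<i> * of_real t * (of_nat r + 2) / 2) * (\<Sum>\<theta>\<in>\<Theta>. term t \<theta>)
      = 1/2 * (\<Sum>\<theta>\<in>\<Theta>. F t \<theta>)" for t \<Theta>
    unfolding term_def F_def B_def Q_amplitude_def by (simp add: sum_distrib_left mult_ac)
  have "B (2 * real r) = 0" if "2 * real r \<notin> lap_spectrum V adj"
    using that L.eig_proj_outside_spectrum
    unfolding B_def lap_proj_def lap_spectrum_def bilin_def by simp
  then have "(\<Sum>\<theta>\<in>lap_spectrum V adj. F t \<theta>)
      = (\<Sum>\<theta>\<in>lap_spectrum V adj - {2 * real r}. F t \<theta>) + exp (- \<i> * of_nat r * of_real t) * B (2 * real r)"
    for t
    using L.finite_spectrum unfolding F_def lap_spectrum_def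
    by (cases "2 * real r \<in> spectrum V (laplacian V adj)") (simp_all add: sum.remove Q_amplitude_2r)
  then show ?thesis
    using lhs terms unfolding B_def by (simp add: algebra_simps)
qed

end
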